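(* Let $N\in\mathbf{N}$, $\varepsilon=2^{-N}$, $\Lambda_\varepsilon=\varepsilon\mathbf{Z}$, and let $\varphi,\psi$ and $\varphi^{N,n}_x,\psi^{N,m}_x$ be as described in the context. Then for every integer $n\in[0,N)$ the set $$\{\varphi^{N,n}_x:x\in\Lambda_n\}\cup\{\psi^{N,m}_x:m\in[n,N)\cap\mathbf{N},\,x\in\Lambda_m\}$$ (restricted to $\Lambda_\varepsilon$) forms an orthonormal basis of $\ell^2(\Lambda_\varepsilon)$ equipped with the inner product $\langle f,g\rangle_\varepsilon=\varepsilon\sum_{y\in\Lambda_\varepsilon}f(y)g(y)$.
   Context: For $n\in\mathbf{N}$ let $\Lambda_n=\{2^{-n}k:k\in\mathbf{Z}\}$. Let $\varphi\in\mathcal{C}^r(\mathbf{R})$ ($r>0$) be a compactly supported (Daubechies) scaling function: $\int\varphi=1$, $\int\varphi(x)\varphi(x+k)dx=\delta_{0,k}$ for $k\in\mathbf{Z}$, and with $\varphi^n_x(\cdot)=2^{n/2}\varphi(2^n(\cdot-x))$ ($x\in\Lambda_n$) there are a finite set $\mathcal{K}\subset\Lambda_1$ and constants $a_k$ with $\varphi^n_x=\sum_{k\in\mathcal{K}}a_k\varphi^{n+1}_{x+2^{-n}k}$. Let $V_n=\overline{\mathrm{span}}\{\varphi^n_x:x\in\Lambda_n\}\subset L^2(\mathbf{R})$ (so $\{\varphi^n_x\}$ is an orthonormal basis of $V_n$ and $V_n\subset V_{n+1}$), and let $\psi\in\mathcal{C}^r(\mathbf{R})$ be the associated compactly supported wavelet,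 so that $\{\psi^n_x:x\in\Lambda_n\}$, $\psi^n_x=2^{n/2}\psi(2^n(\cdot-x))$, is an orthonormal basis of the orthogonal complement of $V_n$ in $V_{n+1}$, with $\psi^n_x=\sum_{k\in\mathcal{K}}b_k\varphi^{n+1}_{x+2^{-n}k}$ for constants $b_k$. For integers $0\le n\le N$ define the functions $\varphi^{N,n}_x(y)=2^{N/2}\langle\varphi^N_y,\varphi^n_x\rangle_{L^2(\mathbf{R})}$ and, for $n<N$, $\psi^{N,n}_x(y)=2^{N/2}\langle\varphi^N_y,\psi^n_x\rangle_{L^2(\mathbf{R})}$, $x\in\Lambda_n$, $y\in\mathbf{R}$. *)

theory Defs
  imports "HOL-Analysis.Analysis"
begin

definition Lam :: "nat \<Rightarrow> real set" where
  "Lam n = {of_int k / 2 ^ n | k :: int. True}"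

definition Cr :: "real \<Rightarrow> (real \<Rightarrow> real) \<Rightarrow> bool" where
  "Cr r f \<longleftrightarrow> (let k = nat (\<lceil>r\<rceil> - 1) in
      (\<forall>j<k. \<forall>x. ((deriv ^^ j) f) differentiable (at x)) \<and>
      (\<forall>a b. \<exists>C. \<forall>x\<in>{a..b}. \<forall>y\<in>{a..b}.
          \<bar>(deriv ^^ k) f x - (deriv ^^ k) f y\<bar> \<le> C * \<bar>x - y\<bar> powr (r - real k)))"

definition scl :: "(real \<Rightarrow> real) \<Rightarrow> nat \<Rightarrow> real \<Rightarrow> real \<Rightarrow> real" where
  "scl f n x = (\<lambda>y. 2 powr (real n / 2) * f (2 ^ n * (y - x)))"

definition L2ip :: "(real \<Rightarrow> real) \<Rightarrow> (real \<Rightarrow> real) \<Rightarrow> real" where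
  "L2ip f g = (\<integral>y. f y * g y \<partial>lborel)"

definition sq_int :: "(real \<Rightarrow> real) \<Rightarrow> bool" where
  "sq_int f \<longleftrightarrow> f \<in> borel_measurable lborel \<and> integrable lborel (\<lambda>y. (f y)\<^sup>2)"

definition fin_span :: "(real \<Rightarrow> real) \<Rightarrow> nat \<Rightarrow> (real \<Rightarrow> real) set" where
  "fin_span \<phi> n = {(\<lambda>y. \<Sum>x\<in>S. c x * scl \<phi> n x y) | S c. finite S \<and> S \<subseteq> Lam n}"

definition Vsp :: "(real \<Rightarrow> real) \<Rightarrow> nat \<Rightarrow> (real \<Rightarrow> real) set" where
  "Vsp \<phi> n = {f. sq_int f \<and> (\<exists>g. (\<forall>j. g j \<in> fin_span \<phi> n) \<and>
      (\<lambda>j. \<integral>y. (f y - g j y)\<^sup>2 \<partial>lborel) \<longlonglongrightarrow> 0)}"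

text \<open>phi^{N,n}_x(y) = 2^{N/2} <phi^N_y, phi^n_x> and psi^{N,n}_x(y) = 2^{N/2} <phi^N_y, psi^n_x>.\<close>
definition coarse :: "(real \<Rightarrow> real) \<Rightarrow> (real \<Rightarrow> real) \<Rightarrow> nat \<Rightarrow> nat \<Rightarrow> real \<Rightarrow> real \<Rightarrow> real" where
  "coarse \<phi> g N n x y = 2 powr (real N / 2) * L2ip (scl \<phi> N y) (scl g n x)"

definition ip_eps :: "nat \<Rightarrow> (real \<Rightarrow> real) \<Rightarrow> (real \<Rightarrow> real) \<Rightarrow> real" where
  "ip_eps N f g = (1 / 2 ^ N) * (\<Sum>\<^sub>\<infinity>y\<in>Lam N. f y * g y)"

definition in_l2 :: "nat \<Rightarrow> (real \<Rightarrow> real) \<Rightarrow> bool" where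
  "in_l2 N f \<longleftrightarrow> (\<lambda>y. (f y)\<^sup>2) summable_on Lam N"

definition is_ONB_l2 :: "nat \<Rightarrow> 'i set \<Rightarrow> ('i \<Rightarrow> real \<Rightarrow> real) \<Rightarrow> bool" where
  "is_ONB_l2 N I e \<longleftrightarrow>
     (\<forall>i\<in>I. in_l2 N (e i)) \<and>
     (\<forall>i\<in>I. \<forall>j\<in>I. ip_eps N (e i) (e j) = (if i = j then 1 else 0)) \<and>
     (\<forall>f. in_l2 N f \<and> (\<forall>i\<in>I. ip_eps N f (e i) = 0) \<longrightarrow> (\<forall>y\<in>Lam N. f y = 0))"

end

theory Submission
  imports Defs
begin

text \<open>Let \<open>\<alpha>\<close> send \<open>h \<in> V\<^sub>N\<close> to its coefficient sequence \<open>y \<mapsto> 2\<^bsup>N/2\<^esup> \<langle>\<phi>\<^sup>N\<^sub>y, h\<rangle>\<close> on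
  \<open>\<Lambda>\<^sub>N\<close>. Since \<open>{\<phi>\<^sup>N\<^sub>y}\<close> is orthonormal, \<open>\<alpha>\<close> is an isometry from \<open>V\<^sub>N\<close> (with the \<open>L\<^sup>2\<close> product)
  onto \<open>\<ell>\<^sup>2(\<Lambda>\<^sub>\<epsilon>)\<close> (with \<open>\<langle>\<cdot>,\<cdot>\<rangle>\<^sub>\<epsilon>\<close>), and the family in question is the image under \<open>\<alpha>\<close> of
  \<open>{\<phi>\<^sup>n\<^sub>x} \<union> {\<psi>\<^sup>m\<^sub>x : n \<le> m < N}\<close>. That family is orthonormal in \<open>V\<^sub>N\<close>, and it is complete there
  because \<open>V\<^sub>N = V\<^sub>n \<oplus> W\<^sub>n \<oplus> \<dots> \<oplus> W\<^sub>N\<^sub>-\<^sub>1\<close>: by induction on the level, an element of \<open>V\<^sub>k\<^sub>+\<^sub>1\<close>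
  is split into its projection onto \<open>V\<^sub>k\<close> and a remainder orthogonal to \<open>V\<^sub>k\<close> and to \<open>W\<^sub>k\<close>, which
  therefore vanishes. Totality in \<open>\<ell>\<^sup>2\<close> follows by expanding each point mass \<open>\<alpha>(\<phi>\<^sup>N\<^sub>y)\<close> in the
  family; all sums involved are finite since the functions have bounded support.\<close>

definition continuous_bounded_support :: "(real \<Rightarrow> real) \<Rightarrow> bool" where
  "continuous_bounded_support f \<longleftrightarrow> continuous_on UNIV f \<and> bounded {t. f t \<noteq> 0}"

lemma bounded_support_bound:
  assumes "bounded {t. (f::real\<Rightarrow>real) t \<noteq> 0}"
  obtains R where "\<And>t. f t \<noteq> 0 \<Longrightarrow> \<bar>t\<bar> \<le> R"
  using assms unfolding bounded_iff by auto

lemma integrable_mult_continuous_bounded_support: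
  assumes "continuous_bounded_support f" "continuous_bounded_support g"
  shows "integrable lborel (\<lambda>t. f t * g t)"
proof -
  obtain R where R: "\<And>t. f t \<noteq> 0 \<Longrightarrow> \<bar>t\<bar> \<le> R"
    using assms(1) unfolding continuous_bounded_support_def by (metis bounded_support_bound)
  have "continuous_on (cball 0 R) (\<lambda>t. f t * g t)"
    using assms unfolding continuous_bounded_support_def
    by (intro continuous_intros) (auto intro: continuous_on_subset)
  then have "integrable lborel (\<lambda>t. indicator (cball 0 R) t *\<^sub>R (f t * g t))"
    by (rule borel_integrable_compact[OF compact_cball])
  moreover have "(\<lambda>t. indicator (cball 0 R) t *\<^sub>R (f t * g t)) = (\<lambda>t. f t * g t)"
  proof
    fix t show "indicator (cball 0 R) t *\<^sub>R (f t * g t) = f t * g t"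
      using R[of t] by (cases "f t = 0") (auto simp: indicator_def dist_real_def)
  qed
  ultimately show ?thesis by simp
qed

lemma continuous_bounded_support_add:
  "continuous_bounded_support f \<Longrightarrow> continuous_bounded_support g \<Longrightarrow>
    continuous_bounded_support (\<lambda>t. f t + g t)"
  unfolding continuous_bounded_support_def
  by (auto intro!: continuous_intros
      intro: bounded_subset[of "{t. f t \<noteq> 0} \<union> {t. g t \<noteq> 0}"])

lemma continuous_bounded_support_cmult:
  "continuous_bounded_support f \<Longrightarrow> continuous_bounded_support (\<lambda>t. c * f t)"
  unfolding continuous_bounded_support_def
  by (auto intro!: continuous_intros elim: bounded_subset)

lemma continuous_bounded_support_sum:
  "finite A \<Longrightarrow> (\<And>i. i \<in> A \<Longrightarrow> continuous_bounded_support (u i)) \<Longrightarrow>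
    continuous_bounded_support (\<lambda>t. \<Sum>i\<in>A. c i * u i t)"
proof (induction A rule: finite_induct)
  case empty
  then show ?case by (simp add: continuous_bounded_support_def)
next
  case (insert x F)
  then show ?case
    using continuous_bounded_support_add[OF continuous_bounded_support_cmult[of "u x" "c x"]]
    by simp
qed

lemma abs_le_abs_power_of_two_mult: "\<bar>s\<bar> \<le> \<bar>2 ^ m * s :: real\<bar>"
  by (simp add: abs_mult mult_le_cancel_right1)

lemma continuous_bounded_support_scl:
  assumes "continuous_bounded_support f"
  shows "continuous_bounded_support (scl f m x)"
proof -
  obtain R where R: "\<And>t. f t \<noteq> 0 \<Longrightarrow> \<bar>t\<bar> \<le> R"
    using assms unfolding continuous_bounded_support_def by (metis bounded_support_bound)
  have "continuous_on UNIV f" using assms unfolding continuous_bounded_support_def by blast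
  then have "continuous_on UNIV (\<lambda>y. f (2 ^ m * (y - x)))"
    by (rule continuous_on_compose2) (auto intro!: continuous_intros)
  moreover have "{y. scl f m x y \<noteq> 0} \<subseteq> cball x R"
  proof
    fix y assume "y \<in> {y. scl f m x y \<noteq> 0}"
    then have "\<bar>2 ^ m * (y - x)\<bar> \<le> R" using R by (simp add: scl_def)
    then show "y \<in> cball x R"
      using abs_le_abs_power_of_two_mult[of "y - x" m] by (simp add: dist_real_def abs_minus_commute)
  qed
  ultimately show ?thesis unfolding continuous_bounded_support_def scl_def
    by (auto intro!: continuous_intros intro: bounded_subset[OF bounded_cball])
qed

lemma L2ip_commute: "L2ip f g = L2ip g f"
  unfolding L2ip_def by (simp add: mult.commute)

lemma L2ip_sum_left:
  assumes "finite A" "\<And>i. i \<in> A \<Longrightarrow> continuous_bounded_support (u i)"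
    "continuous_bounded_support g"
  shows "L2ip (\<lambda>t. \<Sum>i\<in>A. c i * u i t) g = (\<Sum>i\<in>A. c i * L2ip (u i) g)"
proof -
  have "L2ip (\<lambda>t. \<Sum>i\<in>A. c i * u i t) g = (\<integral>t. (\<Sum>i\<in>A. c i * (u i t * g t)) \<partial>lborel)"
    unfolding L2ip_def by (simp add: sum_distrib_right mult.assoc)
  also have "\<dots> = (\<Sum>i\<in>A. c i * L2ip (u i) g)"
    unfolding L2ip_def using assms integrable_mult_continuous_bounded_support by simp
  finally show ?thesis .
qed

lemma L2ip_diff_left:
  assumes "continuous_bounded_support f" "continuous_bounded_support f'"
    "continuous_bounded_support g"
  shows "L2ip (\<lambda>t. f t - f' t) g = L2ip f g - L2ip f' g"
  unfolding L2ip_def using assms integrable_mult_continuous_bounded_support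
  by (simp add: left_diff_distrib)

lemma L2ip_add_left:
  assumes "continuous_bounded_support f" "continuous_bounded_support f'"
    "continuous_bounded_support g"
  shows "L2ip (\<lambda>t. f t + f' t) g = L2ip f g + L2ip f' g"
  unfolding L2ip_def using assms integrable_mult_continuous_bounded_support
  by (simp add: distrib_right)

lemma L2ip_add_self_orthogonal:
  assumes "continuous_bounded_support p" "continuous_bounded_support q" "L2ip q p = 0"
  shows "L2ip (\<lambda>t. p t + q t) (\<lambda>t. p t + q t) = L2ip p p + L2ip q q"
proof -
  have pq: "continuous_bounded_support (\<lambda>t. p t + q t)"
    by (rule continuous_bounded_support_add[OF assms(1,2)])
  have "L2ip (\<lambda>t. p t + q t) (\<lambda>t. p t + q t) = L2ip (\<lambda>t. p t + q t) p + L2ip (\<lambda>t. p t + q t) q"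
    by (subst (1 2 3) L2ip_commute) (rule L2ip_add_left[OF assms(1,2) pq])
  also have "\<dots> = L2ip p p + L2ip q q"
    using L2ip_add_left[OF assms(1,2), of p] L2ip_add_left[OF assms(1,2), of q] assms
    by (simp add: L2ip_commute[of p q])
  finally show ?thesis .
qed

lemma L2ip_residual_orthogonal:
  assumes "finite A" "A \<subseteq> J" "\<And>i. i \<in> J \<Longrightarrow> continuous_bounded_support (u i)"
    and orthonormal: "\<And>i j. i \<in> J \<Longrightarrow> j \<in> J \<Longrightarrow> L2ip (u i) (u j) = (if i = j then 1 else 0)"
    and "continuous_bounded_support h" "j \<in> J"
    and "\<And>i. i \<in> J \<Longrightarrow> i \<notin> A \<Longrightarrow> L2ip h (u i) = 0"
  shows "L2ip (\<lambda>t. h t - (\<Sum>i\<in>A. L2ip h (u i) * u i t)) (u j) = 0"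
proof -
  have uA: "\<And>i. i \<in> A \<Longrightarrow> continuous_bounded_support (u i)" using assms(2,3) by auto
  have "L2ip (\<lambda>t. h t - (\<Sum>i\<in>A. L2ip h (u i) * u i t)) (u j)
      = L2ip h (u j) - (\<Sum>i\<in>A. L2ip h (u i) * L2ip (u i) (u j))"
    using L2ip_diff_left[OF assms(5) continuous_bounded_support_sum[OF assms(1) uA] assms(3)[OF assms(6)]]
      L2ip_sum_left[OF assms(1) uA assms(3)[OF assms(6)]] by simp
  also have "(\<Sum>i\<in>A. L2ip h (u i) * L2ip (u i) (u j)) = (\<Sum>i\<in>A. if i = j then L2ip h (u i) else 0)"
    by (rule sum.cong) (use orthonormal assms(2,6) in auto)
  also have "\<dots> = (if j \<in> A then L2ip h (u j) else 0)"
    using assms(1) by (simp add: sum.delta)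
  finally show ?thesis using assms(6,7) by auto
qed

lemma Lam_iff: "x \<in> Lam m \<longleftrightarrow> (\<exists>k::int. x = of_int k / 2 ^ m)"
  unfolding Lam_def by auto

lemma Lam_refinement_shift:
  assumes "x \<in> Lam m" "k \<in> Lam 1"
  shows "x + k / 2 ^ m \<in> Lam (Suc m)"
proof -
  obtain i j :: int where "x = of_int i / 2 ^ m" "k = of_int j / 2"
    using assms by (auto simp: Lam_iff)
  then have "x + k / 2 ^ m = of_int (2 * i + j) / 2 ^ Suc m" by (simp add: field_simps)
  then show ?thesis unfolding Lam_iff by blast
qed

lemma Lam_diff_scaled_int:
  assumes "x \<in> Lam m" "x' \<in> Lam m"
  obtains k :: int where "2 ^ m * (x - x') = of_int k" "x = x' \<longleftrightarrow> k = 0"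
proof -
  obtain i j :: int where "x = of_int i / 2 ^ m" "x' = of_int j / 2 ^ m"
    using assms by (auto simp: Lam_iff)
  with that[of "i - j"] show ?thesis by (auto simp: field_simps)
qed

lemma finite_Lam_bounded: "finite {x \<in> Lam m. \<bar>x\<bar> \<le> A}"
proof -
  let ?c = "\<lceil>A * 2 ^ m\<rceil>"
  have "{x \<in> Lam m. \<bar>x\<bar> \<le> A} \<subseteq> (\<lambda>k. of_int k / 2 ^ m) ` {-?c..?c}"
  proof
    fix x assume "x \<in> {x \<in> Lam m. \<bar>x\<bar> \<le> A}"
    then obtain k where k: "x = of_int k / 2 ^ m" "\<bar>x\<bar> \<le> A" by (auto simp: Lam_iff)
    then have "\<bar>real_of_int k\<bar> \<le> A * 2 ^ m" by (simp add: abs_divide divide_le_eq)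
    also have "\<dots> \<le> real_of_int ?c" by (rule le_of_int_ceiling)
    finally have "\<bar>k\<bar> \<le> ?c" by linarith
    then show "x \<in> (\<lambda>k. of_int k / 2 ^ m) ` {-?c..?c}"
      using k(1) by (intro image_eqI[where x=k]) auto
  qed
  then show ?thesis by (rule finite_subset) auto
qed

lemma fin_span_iff: "h \<in> fin_span f m \<longleftrightarrow>
   (\<exists>S c. finite S \<and> S \<subseteq> Lam m \<and> h = (\<lambda>y. \<Sum>x\<in>S. c x * scl f m x y))"
  unfolding fin_span_def by auto

lemma fin_span_scl: "x \<in> Lam m \<Longrightarrow> scl f m x \<in> fin_span f m"
  unfolding fin_span_iff by (intro exI[of _ "{x}"] exI[of _ "\<lambda>_. 1"]) auto

lemma fin_span_cmult: "h \<in> fin_span f m \<Longrightarrow> (\<lambda>y. c * h y) \<in> fin_span f m"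
  unfolding fin_span_iff
  by (fastforce simp: sum_distrib_left mult.assoc intro!: exI[of _ "\<lambda>x. c * _ x"])

lemma fin_span_add:
  assumes "h \<in> fin_span f m" "h' \<in> fin_span f m"
  shows "(\<lambda>y. h y + h' y) \<in> fin_span f m"
proof -
  obtain S c where S: "finite S" "S \<subseteq> Lam m" "h = (\<lambda>y. \<Sum>x\<in>S. c x * scl f m x y)"
    using assms(1) unfolding fin_span_iff by blast
  obtain S' c' where S': "finite S'" "S' \<subseteq> Lam m" "h' = (\<lambda>y. \<Sum>x\<in>S'. c' x * scl f m x y)"
    using assms(2) unfolding fin_span_iff by blast
  define d where "d x = (if x \<in> S then c x else 0) + (if x \<in> S' then c' x else 0)" for x
  have "(\<Sum>x\<in>S \<union> S'. (if x \<in> S then c x else 0) * scl f m x y) = (\<Sum>x\<in>S. c x * scl f m x y)"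
    and "(\<Sum>x\<in>S \<union> S'. (if x \<in> S' then c' x else 0) * scl f m x y) = (\<Sum>x\<in>S'. c' x * scl f m x y)"
    for y by (rule sum.mono_neutral_cong_right; use S S' in auto)+
  then have "(\<lambda>y. h y + h' y) = (\<lambda>y. \<Sum>x\<in>S \<union> S'. d x * scl f m x y)"
    by (simp add: S(3) S'(3) d_def distrib_right sum.distrib)
  then show ?thesis unfolding fin_span_iff using S S' by blast
qed

lemma fin_span_diff:
  "h \<in> fin_span f m \<Longrightarrow> h' \<in> fin_span f m \<Longrightarrow> (\<lambda>y. h y - h' y) \<in> fin_span f m"
  using fin_span_add[OF _ fin_span_cmult, of h f m h' "-1"] by simp

lemma fin_span_sum:
  "finite A \<Longrightarrow> (\<And>i. i \<in> A \<Longrightarrow> u i \<in> fin_span f m) \<Longrightarrow>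
    (\<lambda>y. \<Sum>i\<in>A. c i * u i y) \<in> fin_span f m"
proof (induction A rule: finite_induct)
  case empty
  have "(\<lambda>y. 0) \<in> fin_span f m" unfolding fin_span_iff by (intro exI[of _ "{}"]) auto
  then show ?case by simp
next
  case (insert x F)
  then show ?case using fin_span_add[OF fin_span_cmult[of "u x" f m "c x"]] by simp
qed

lemma fin_span_continuous_bounded_support:
  "continuous_bounded_support f \<Longrightarrow> h \<in> fin_span f m \<Longrightarrow> continuous_bounded_support h"
  unfolding fin_span_iff
  using continuous_bounded_support_sum continuous_bounded_support_scl by fastforce

lemma refinement_in_fin_span:
  assumes "finite K" "K \<subseteq> Lam 1" "x \<in> Lam m"
  shows "(\<lambda>y. \<Sum>k\<in>K. c k * scl f (Suc m) (x + k / 2 ^ m) y) \<in> fin_span f (Suc m)"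
  using assms by (intro fin_span_sum fin_span_scl Lam_refinement_shift) auto

lemma fin_span_mono:
  assumes "\<And>m x. x \<in> Lam m \<Longrightarrow> scl f m x \<in> fin_span f (Suc m)" "m \<le> m'"
  shows "fin_span f m \<subseteq> fin_span f m'"
  using assms(2)
proof (induction m' rule: dec_induct)
  case (step k)
  have "fin_span f k \<subseteq> fin_span f (Suc k)"
  proof
    fix h assume "h \<in> fin_span f k"
    then obtain S c where "finite S" "S \<subseteq> Lam k" "h = (\<lambda>y. \<Sum>x\<in>S. c x * scl f k x y)"
      unfolding fin_span_iff by blast
    then show "h \<in> fin_span f (Suc k)" using assms(1) by (auto intro!: fin_span_sum)
  qed
  then show ?case using step.IH by blast
qed simp

lemma sq_int_continuous_bounded_support:
  assumes "continuous_bounded_support h"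
  shows "sq_int h"
  using assms integrable_mult_continuous_bounded_support[OF assms assms]
  unfolding sq_int_def continuous_bounded_support_def
  by (simp add: borel_measurable_continuous_onI power2_eq_square)

lemma fin_span_subset_Vsp:
  assumes "continuous_bounded_support f" "h \<in> fin_span f m"
  shows "h \<in> Vsp f m"
  unfolding Vsp_def
  using assms fin_span_continuous_bounded_support sq_int_continuous_bounded_support
  by (auto intro!: exI[of _ "\<lambda>j. h"])

lemma abs_mult_le_weighted_squares:
  fixes a b s :: real
  assumes "s > 0"
  shows "\<bar>a * b\<bar> \<le> (s * a\<^sup>2 + b\<^sup>2 / s) / 2"
proof -
  have "0 \<le> (s * \<bar>a\<bar> - \<bar>b\<bar>)\<^sup>2" by simp
  then have "2 * s * \<bar>a * b\<bar> \<le> s * (s * a\<^sup>2) + b\<^sup>2"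
    by (simp add: power2_eq_square abs_mult algebra_simps)
  then show ?thesis using assms by (simp add: field_simps)
qed

lemma integrable_mult_sq_int:
  assumes "sq_int f" "sq_int g"
  shows "integrable lborel (\<lambda>t. f t * g t)"
proof (rule Bochner_Integration.integrable_bound)
  show "integrable lborel (\<lambda>t. ((f t)\<^sup>2 + (g t)\<^sup>2) / 2)"
    using assms unfolding sq_int_def by auto
  show "(\<lambda>t. f t * g t) \<in> borel_measurable lborel"
    using assms unfolding sq_int_def by auto
  show "AE t in lborel. norm (f t * g t) \<le> norm (((f t)\<^sup>2 + (g t)\<^sup>2) / 2)"
    using abs_mult_le_weighted_squares[of 1] by auto
qed

lemma sq_int_diff:
  assumes "sq_int f" "sq_int g"
  shows "sq_int (\<lambda>t. f t - g t)"
proof -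
  have "(\<lambda>t. (f t - g t)\<^sup>2) = (\<lambda>t. (f t)\<^sup>2 + (g t)\<^sup>2 - 2 * (f t * g t))"
    by (simp add: power2_eq_square algebra_simps)
  then show ?thesis
    using assms integrable_mult_sq_int[OF assms] unfolding sq_int_def by auto
qed

lemma abs_L2ip_le_weighted_norms:
  assumes "sq_int f" "sq_int d" "s > 0"
  shows "\<bar>L2ip f d\<bar> \<le> (s * (\<integral>t. (f t)\<^sup>2 \<partial>lborel) + (\<integral>t. (d t)\<^sup>2 \<partial>lborel) / s) / 2"
proof -
  have sq: "integrable lborel (\<lambda>t. (f t)\<^sup>2)" "integrable lborel (\<lambda>t. (d t)\<^sup>2)"
    using assms unfolding sq_int_def by auto
  have "\<bar>L2ip f d\<bar> \<le> (\<integral>t. norm (f t * d t) \<partial>lborel)"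
    unfolding L2ip_def using integral_norm_bound[of lborel "\<lambda>t. f t * d t"] by simp
  also have "\<dots> \<le> (\<integral>t. (s * (f t)\<^sup>2 + (d t)\<^sup>2 / s) / 2 \<partial>lborel)"
    by (rule integral_mono)
      (use sq integrable_mult_sq_int[OF assms(1,2)] abs_mult_le_weighted_squares[OF assms(3)] in auto)
  also have "\<dots> = (s * (\<integral>t. (f t)\<^sup>2 \<partial>lborel) + (\<integral>t. (d t)\<^sup>2 \<partial>lborel) / s) / 2"
    using sq by simp
  finally show ?thesis .
qed

lemma L2ip_eq_0_if_orthogonal_to_approximants:
  assumes "sq_int h" "sq_int g" "\<And>j. sq_int (g' j)" "\<And>j. L2ip h (g' j) = 0"
    and lim: "(\<lambda>j. \<integral>y. (g y - g' j y)\<^sup>2 \<partial>lborel) \<longlonglongrightarrow> 0"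
  shows "L2ip h g = 0"
proof -
  define A where "A = (\<integral>t. (h t)\<^sup>2 \<partial>lborel)"
  have "A \<ge> 0" unfolding A_def by simp
  \<comment> \<open>In place of Cauchy-Schwarz: \<open>|\<langle>h, g - g' j\<rangle>| \<le> (s\<parallel>h\<parallel>\<^sup>2 + \<parallel>g - g' j\<parallel>\<^sup>2/s)/2\<close>; let \<open>j \<rightarrow> \<infinity>\<close>, then \<open>s \<rightarrow> 0\<close>.\<close>
  have bound: "\<bar>L2ip h g\<bar> \<le> s * A / 2" if s: "s > 0" for s
  proof -
    have "\<bar>L2ip h g\<bar> \<le> (s * A + (\<integral>y. (g y - g' j y)\<^sup>2 \<partial>lborel) / s) / 2" for j
    proof -
      have "L2ip h g = L2ip h (\<lambda>t. g t - g' j t) + L2ip h (g' j)"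
        unfolding L2ip_def
        using integrable_mult_sq_int[OF assms(1,2)] integrable_mult_sq_int[OF assms(1,3)]
        by (simp add: right_diff_distrib)
      then show ?thesis
        using abs_L2ip_le_weighted_norms[OF assms(1) sq_int_diff[OF assms(2,3)] s] assms(4)
        unfolding A_def by simp
    qed
    moreover have "(\<lambda>j. (s * A + (\<integral>y. (g y - g' j y)\<^sup>2 \<partial>lborel) / s) / 2) \<longlonglongrightarrow> (s * A + 0 / s) / 2"
      by (intro tendsto_intros lim) (use s in auto)
    ultimately show ?thesis
      by (intro LIMSEQ_le_const[where X="\<lambda>j. (s * A + (\<integral>y. (g y - g' j y)\<^sup>2 \<partial>lborel) / s) / 2"]) auto
  qed
  have "\<bar>L2ip h g\<bar> \<le> 0"
  proof (rule field_le_epsilon)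
    fix e :: real assume "e > 0"
    then have "2 * e / (A + 1) * A / 2 \<le> e"
      using \<open>A \<ge> 0\<close> by (simp add: field_simps)
    with bound[of "2 * e / (A + 1)"] \<open>A \<ge> 0\<close> \<open>e > 0\<close> show "\<bar>L2ip h g\<bar> \<le> 0 + e"
      by simp
  qed
  then show ?thesis by simp
qed

lemma infsum_finite_support:
  fixes f :: "'a \<Rightarrow> real"
  assumes "finite F" "F \<subseteq> A" "\<And>x. x \<in> A \<Longrightarrow> x \<notin> F \<Longrightarrow> f x = 0"
  shows "f summable_on A" "infsum f A = sum f F"
proof -
  have "f summable_on A \<longleftrightarrow> f summable_on F"
    by (rule summable_on_cong_neutral) (use assms in auto)
  then show "f summable_on A" using assms(1) by simp
  have "infsum f A = infsum f F"
    by (rule infsum_cong_neutral) (use assms in auto)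
  then show "infsum f A = sum f F" using assms(1) by simp
qed

lemma Cr_continuous:
  assumes "r > 0" "Cr r f"
  shows "continuous_on UNIV f"
proof -
  define k where "k = nat (\<lceil>r\<rceil> - 1)"
  have diff: "\<forall>j<k. \<forall>x. ((deriv ^^ j) f) differentiable (at x)"
    and hoelder: "\<forall>a b. \<exists>C. \<forall>x\<in>{a..b}. \<forall>y\<in>{a..b}.
          \<bar>(deriv ^^ k) f x - (deriv ^^ k) f y\<bar> \<le> C * \<bar>x - y\<bar> powr (r - real k)"
    using assms(2) unfolding Cr_def Let_def k_def by auto
  show ?thesis
  proof (cases "k = 0")
    case False
    then have "\<forall>x. f differentiable (at x)" using diff by (metis funpow_0 gr0I)
    then show ?thesis
      by (intro continuous_at_imp_continuous_on) (auto intro: differentiable_imp_continuous_within)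
  next
    case True
    have "isCont f x0" for x0
    proof -
      obtain C where C: "\<forall>x\<in>{x0-1..x0+1}. \<forall>y\<in>{x0-1..x0+1}. \<bar>f x - f y\<bar> \<le> C * \<bar>x - y\<bar> powr r"
        using hoelder[rule_format, of "x0-1" "x0+1"] True by auto
      have "eventually (\<lambda>y. norm (f y - f x0) \<le> C * \<bar>y - x0\<bar> powr r) (at x0)"
        unfolding eventually_at
        by (rule exI[of _ 1]) (use C in \<open>auto simp: dist_real_def abs_less_iff\<close>)
      moreover have "((\<lambda>y. C * \<bar>y - x0\<bar> powr r) \<longlongrightarrow> 0) (at x0)"
        by (intro tendsto_mult_right_zero tendsto_zero_powrI)
          (auto intro!: tendsto_eq_intros simp: assms(1))
      ultimately have "((\<lambda>y. f y - f x0) \<longlongrightarrow> 0) (at x0)"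
        by (rule Lim_null_comparison)
      then show ?thesis unfolding isCont_def by (rule LIM_zero_cancel)
    qed
    then show ?thesis by (simp add: continuous_at_imp_continuous_on)
  qed
qed

lemma orthonormal_shifts_imp_scl_orthonormal:
  assumes orth: "\<And>k::int. (\<integral>x. f x * f (x + of_int k) \<partial>lborel) = (if k = 0 then 1 else 0)"
    and "x \<in> Lam m" "x' \<in> Lam m"
  shows "L2ip (scl f m x) (scl f m x') = (if x = x' then 1 else 0)"
proof -
  obtain k where k: "2 ^ m * (x - x') = of_int k" "x = x' \<longleftrightarrow> k = 0"
    using Lam_diff_scaled_int[OF assms(2,3)] by blast
  have c: "(1 / 2 ^ m :: real) \<noteq> 0" by simp
  have "L2ip (scl f m x) (scl f m x')
      = \<bar>1/2^m\<bar> *\<^sub>R (\<integral>s. scl f m x (x + 1/2^m * s) * scl f m x' (x + 1/2^m * s) \<partial>lborel)"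
    unfolding L2ip_def by (rule lborel_integral_real_affine[OF c])
  also have "(\<lambda>s. scl f m x (x + 1/2^m * s) * scl f m x' (x + 1/2^m * s))
      = (\<lambda>s. 2 ^ m * (f s * f (s + of_int k)))"
  proof
    fix s
    have sq: "2 powr (real m / 2) * 2 powr (real m / 2) = (2::real) ^ m"
      by (simp add: powr_add[symmetric] powr_realpow)
    have shift: "2 ^ m * (x + 1 / 2 ^ m * s - x') = s + 2 ^ m * (x - x')"
      by (simp add: field_simps)
    show "scl f m x (x + 1/2^m * s) * scl f m x' (x + 1/2^m * s)
        = 2 ^ m * (f s * f (s + of_int k))"
      unfolding scl_def shift k(1)[symmetric] using sq by (simp add: field_simps)
  qed
  finally show ?thesis using orth[of k] k(2) by simp
qed

lemma finite_L2ip_scl_nonzero: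
  assumes "bounded {t. g t \<noteq> 0}" "continuous_bounded_support h"
  shows "finite {x \<in> Lam m. L2ip h (scl g m x) \<noteq> 0}"
proof -
  obtain Rg where Rg: "\<And>t. g t \<noteq> 0 \<Longrightarrow> \<bar>t\<bar> \<le> Rg"
    using assms(1) bounded_support_bound by metis
  obtain Rh where Rh: "\<And>t. h t \<noteq> 0 \<Longrightarrow> \<bar>t\<bar> \<le> Rh"
    using assms(2) bounded_support_bound unfolding continuous_bounded_support_def by metis
  have "L2ip h (scl g m x) = 0" if "\<bar>x\<bar> > Rh + Rg" for x
  proof -
    have "h t * scl g m x t = 0" for t
    proof (cases "h t = 0")
      case False
      then have "Rg < \<bar>t - x\<bar>" using Rh that by force
      also have "\<dots> \<le> \<bar>2 ^ m * (t - x)\<bar>" by (rule abs_le_abs_power_of_two_mult)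
      finally show ?thesis using Rg by (force simp: scl_def)
    qed simp
    then have "(\<lambda>t. h t * scl g m x t) = (\<lambda>t. 0)" by blast
    then show ?thesis unfolding L2ip_def by simp
  qed
  then have "{x \<in> Lam m. L2ip h (scl g m x) \<noteq> 0} \<subseteq> {x \<in> Lam m. \<bar>x\<bar> \<le> Rh + Rg}"
    by force
  then show ?thesis by (rule finite_subset[OF _ finite_Lam_bounded])
qed

locale orthonormal_scaling =
  fixes \<phi> :: "real \<Rightarrow> real"
  assumes continuous_bounded_support_phi: "continuous_bounded_support \<phi>"
    and scl_orthonormal: "\<And>m x x'. x \<in> Lam m \<Longrightarrow> x' \<in> Lam m \<Longrightarrow>
        L2ip (scl \<phi> m x) (scl \<phi> m x') = (if x = x' then 1 else 0)"
begin

lemma continuous_bounded_support_scl_phi: "continuous_bounded_support (scl \<phi> m x)"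
  by (rule continuous_bounded_support_scl[OF continuous_bounded_support_phi])

lemma continuous_bounded_support_fin_span:
  "h \<in> fin_span \<phi> m \<Longrightarrow> continuous_bounded_support h"
  using fin_span_continuous_bounded_support[OF continuous_bounded_support_phi] by blast

lemma L2ip_scl_expansion:
  assumes "finite S" "S \<subseteq> Lam m" "y \<in> Lam m"
  shows "L2ip (scl \<phi> m y) (\<lambda>t. \<Sum>x\<in>S. c x * scl \<phi> m x t) = (if y \<in> S then c y else 0)"
proof -
  have "L2ip (scl \<phi> m y) (\<lambda>t. \<Sum>x\<in>S. c x * scl \<phi> m x t)
      = (\<Sum>x\<in>S. c x * L2ip (scl \<phi> m x) (scl \<phi> m y))"
    by (subst L2ip_commute)
      (rule L2ip_sum_left[OF assms(1) continuous_bounded_support_scl_phi continuous_bounded_support_scl_phi])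
  also have "\<dots> = (\<Sum>x\<in>S. if x = y then c x else 0)"
    by (rule sum.cong) (use assms(2,3) scl_orthonormal in auto)
  finally show ?thesis using assms(1) by (simp add: sum.delta')
qed

lemma finite_L2ip_scl_fin_span:
  assumes "h \<in> fin_span \<phi> m"
  shows "finite {y \<in> Lam m. L2ip (scl \<phi> m y) h \<noteq> 0}"
proof -
  obtain S c where S: "finite S" "S \<subseteq> Lam m" "h = (\<lambda>t. \<Sum>x\<in>S. c x * scl \<phi> m x t)"
    using assms unfolding fin_span_iff by blast
  then have "{y \<in> Lam m. L2ip (scl \<phi> m y) h \<noteq> 0} \<subseteq> S"
    using L2ip_scl_expansion by (auto split: if_splits)
  then show ?thesis using S(1) finite_subset by blast
qed

lemma infsum_L2ip_scl:
  assumes "h \<in> fin_span \<phi> m" "continuous_bounded_support g"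
  shows "(\<Sum>\<^sub>\<infinity>y\<in>Lam m. L2ip (scl \<phi> m y) h * L2ip (scl \<phi> m y) g) = L2ip h g"
proof -
  obtain S c where S: "finite S" "S \<subseteq> Lam m" "h = (\<lambda>t. \<Sum>x\<in>S. c x * scl \<phi> m x t)"
    using assms(1) unfolding fin_span_iff by blast
  have "(\<Sum>\<^sub>\<infinity>y\<in>Lam m. L2ip (scl \<phi> m y) h * L2ip (scl \<phi> m y) g)
      = (\<Sum>y\<in>S. L2ip (scl \<phi> m y) h * L2ip (scl \<phi> m y) g)"
    by (rule infsum_finite_support(2)[OF S(1,2)]) (use L2ip_scl_expansion[OF S(1,2)] S(3) in auto)
  also have "\<dots> = (\<Sum>y\<in>S. c y * L2ip (scl \<phi> m y) g)"
    by (rule sum.cong) (use L2ip_scl_expansion[OF S(1,2)] S in auto)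
  also have "\<dots> = L2ip h g"
    unfolding S(3)
    by (rule L2ip_sum_left[OF S(1) continuous_bounded_support_scl_phi assms(2), symmetric])
  finally show ?thesis .
qed

lemma L2ip_scl_eq_0_if_null:
  assumes "h \<in> fin_span \<phi> m" "L2ip h h = 0" "y \<in> Lam m"
  shows "L2ip (scl \<phi> m y) h = 0"
proof -
  have "(\<Sum>\<^sub>\<infinity>y\<in>Lam m. (L2ip (scl \<phi> m y) h)\<^sup>2) = 0"
    using infsum_L2ip_scl[OF assms(1) continuous_bounded_support_fin_span[OF assms(1)]] assms(2)
    by (simp add: power2_eq_square)
  moreover have "(\<lambda>y. (L2ip (scl \<phi> m y) h)\<^sup>2) summable_on Lam m"
    by (rule infsum_finite_support(1)[OF finite_L2ip_scl_fin_span[OF assms(1)]]) auto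
  ultimately have "(L2ip (scl \<phi> m y) h)\<^sup>2 = 0"
    by (intro nonneg_infsum_le_0D[where f="\<lambda>y. (L2ip (scl \<phi> m y) h)\<^sup>2" and A="Lam m"])
      (simp_all add: assms(3))
  then show ?thesis by simp
qed

lemma L2ip_orthogonal_fin_span:
  assumes "continuous_bounded_support h" "\<And>x. x \<in> Lam k \<Longrightarrow> L2ip h (scl \<phi> k x) = 0"
    "u \<in> fin_span \<phi> k"
  shows "L2ip h u = 0"
proof -
  obtain S c where S: "finite S" "S \<subseteq> Lam k" "u = (\<lambda>t. \<Sum>x\<in>S. c x * scl \<phi> k x t)"
    using assms(3) unfolding fin_span_iff by blast
  have "L2ip h u = (\<Sum>x\<in>S. c x * L2ip (scl \<phi> k x) h)"
    unfolding S(3)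
    by (subst L2ip_commute) (rule L2ip_sum_left[OF S(1) continuous_bounded_support_scl_phi assms(1)])
  also have "\<dots> = 0" using assms(2) S(2) by (auto simp: L2ip_commute intro!: sum.neutral)
  finally show ?thesis .
qed

lemma L2ip_orthogonal_Vsp:
  assumes "continuous_bounded_support h" "\<And>x. x \<in> Lam k \<Longrightarrow> L2ip h (scl \<phi> k x) = 0"
    "g \<in> Vsp \<phi> k"
  shows "L2ip h g = 0"
proof -
  obtain g' where g': "\<And>j. g' j \<in> fin_span \<phi> k" "(\<lambda>j. \<integral>y. (g y - g' j y)\<^sup>2 \<partial>lborel) \<longlonglongrightarrow> 0"
    and "sq_int g"
    using assms(3) unfolding Vsp_def by blast
  show ?thesis
  proof (rule L2ip_eq_0_if_orthogonal_to_approximants[of h g g'])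
    show "sq_int h" using assms(1) by (rule sq_int_continuous_bounded_support)
    show "sq_int (g' j)" for j
      by (rule sq_int_continuous_bounded_support[OF continuous_bounded_support_fin_span[OF g'(1)]])
    show "L2ip h (g' j) = 0" for j
      by (rule L2ip_orthogonal_fin_span[OF assms(1,2) g'(1)])
  qed fact+
qed

lemma fin_span_projection:
  assumes "continuous_bounded_support h"
  obtains p where "p \<in> fin_span \<phi> k" "\<And>x. x \<in> Lam k \<Longrightarrow> L2ip (\<lambda>t. h t - p t) (scl \<phi> k x) = 0"
proof -
  define A where "A = {x \<in> Lam k. L2ip h (scl \<phi> k x) \<noteq> 0}"
  have "bounded {t. \<phi> t \<noteq> 0}"
    using continuous_bounded_support_phi by (simp add: continuous_bounded_support_def)
  then have "finite A" unfolding A_def by (rule finite_L2ip_scl_nonzero[OF _ assms])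
  show ?thesis
  proof (rule that)
    show "(\<lambda>t. \<Sum>x\<in>A. L2ip h (scl \<phi> k x) * scl \<phi> k x t) \<in> fin_span \<phi> k"
      by (rule fin_span_sum[OF \<open>finite A\<close> fin_span_scl]) (simp add: A_def)
    show "L2ip (\<lambda>t. h t - (\<Sum>x\<in>A. L2ip h (scl \<phi> k x) * scl \<phi> k x t)) (scl \<phi> k x) = 0"
      if "x \<in> Lam k" for x
      by (rule L2ip_residual_orthogonal[OF \<open>finite A\<close> _ continuous_bounded_support_scl_phi
            scl_orthonormal assms that]) (auto simp: A_def)
  qed
qed

lemma scl_expansion_in_complete_family:
  assumes G_span: "\<And>i. i \<in> I \<Longrightarrow> G i \<in> fin_span \<phi> N"
    and G_orthonormal: "\<And>i j. i \<in> I \<Longrightarrow> j \<in> I \<Longrightarrow> L2ip (G i) (G j) = (if i = j then 1 else 0)"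
    and G_complete: "\<And>h. h \<in> fin_span \<phi> N \<Longrightarrow> (\<forall>i\<in>I. L2ip h (G i) = 0) \<Longrightarrow> L2ip h h = 0"
    and "finite {i \<in> I. L2ip (scl \<phi> N y0) (G i) \<noteq> 0}"
    and "y0 \<in> Lam N" "y \<in> Lam N"
  shows "(\<Sum>i | i \<in> I \<and> L2ip (scl \<phi> N y0) (G i) \<noteq> 0.
            L2ip (scl \<phi> N y0) (G i) * L2ip (scl \<phi> N y) (G i)) = (if y = y0 then 1 else 0)"
proof -
  define I0 where "I0 = {i \<in> I. L2ip (scl \<phi> N y0) (G i) \<noteq> 0}"
  have "finite I0" unfolding I0_def by (rule assms(4))
  have G_cbs: "continuous_bounded_support (G i)" if "i \<in> I" for i
    using G_span that continuous_bounded_support_fin_span by blast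
  then have G0_cbs: "continuous_bounded_support (G i)" if "i \<in> I0" for i
    using that by (simp add: I0_def)
  define res where "res t = scl \<phi> N y0 t - (\<Sum>i\<in>I0. L2ip (scl \<phi> N y0) (G i) * G i t)" for t
  have res_span: "res \<in> fin_span \<phi> N"
    unfolding res_def[abs_def] using assms(4,5) G_span
    by (intro fin_span_diff fin_span_scl fin_span_sum) (auto simp: I0_def)
  have "L2ip res (G j) = 0" if "j \<in> I" for j
    unfolding res_def[abs_def]
    by (rule L2ip_residual_orthogonal[OF \<open>finite I0\<close> _ G_cbs G_orthonormal
          continuous_bounded_support_scl_phi that]) (auto simp: I0_def)
  then have "L2ip res (scl \<phi> N y) = 0"
    using L2ip_scl_eq_0_if_null[OF res_span G_complete[OF res_span] assms(6)]
    by (simp add: L2ip_commute)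
  moreover have "L2ip res (scl \<phi> N y) = L2ip (scl \<phi> N y0) (scl \<phi> N y)
      - (\<Sum>i\<in>I0. L2ip (scl \<phi> N y0) (G i) * L2ip (G i) (scl \<phi> N y))"
    unfolding res_def[abs_def]
    using L2ip_diff_left[OF continuous_bounded_support_scl_phi
        continuous_bounded_support_sum[OF \<open>finite I0\<close> G0_cbs] continuous_bounded_support_scl_phi]
      L2ip_sum_left[OF \<open>finite I0\<close> G0_cbs continuous_bounded_support_scl_phi]
    by simp
  ultimately show ?thesis
    using scl_orthonormal[OF assms(5,6)] unfolding I0_def by (auto simp: L2ip_commute)
qed

lemma orthogonal_to_coefficients_imp_zero:
  assumes G_span: "\<And>i. i \<in> I \<Longrightarrow> G i \<in> fin_span \<phi> N"
    and G_orthonormal: "\<And>i j. i \<in> I \<Longrightarrow> j \<in> I \<Longrightarrow> L2ip (G i) (G j) = (if i = j then 1 else 0)"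
    and G_complete: "\<And>h. h \<in> fin_span \<phi> N \<Longrightarrow> (\<forall>i\<in>I. L2ip h (G i) = 0) \<Longrightarrow> L2ip h h = 0"
    and G_local: "\<And>y. y \<in> Lam N \<Longrightarrow> finite {i \<in> I. L2ip (scl \<phi> N y) (G i) \<noteq> 0}"
    and f_orth: "\<And>i. i \<in> I \<Longrightarrow> (\<Sum>\<^sub>\<infinity>y\<in>Lam N. f y * L2ip (scl \<phi> N y) (G i)) = 0"
    and "y0 \<in> Lam N"
  shows "f y0 = 0"
proof -
  define a where "a i y = L2ip (scl \<phi> N y) (G i)" for i y
  define I0 where "I0 = {i \<in> I. a i y0 \<noteq> 0}"
  have "finite I0" unfolding I0_def a_def using G_local[OF \<open>y0 \<in> Lam N\<close>] .
  define T where "T = insert y0 (\<Union>i\<in>I0. {y \<in> Lam N. a i y \<noteq> 0})"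
  have "finite T"
    unfolding T_def a_def using \<open>finite I0\<close> finite_L2ip_scl_fin_span G_span by (auto simp: I0_def)
  have "T \<subseteq> Lam N" unfolding T_def using \<open>y0 \<in> Lam N\<close> by auto
  have expansion: "(\<Sum>i\<in>I0. a i y0 * a i y) = (if y = y0 then 1 else 0)" if "y \<in> Lam N" for y
    unfolding I0_def a_def
    by (rule scl_expansion_in_complete_family)
      (fact G_span G_orthonormal G_complete G_local[OF \<open>y0 \<in> Lam N\<close>] \<open>y0 \<in> Lam N\<close> that)+
  have "f y0 = (\<Sum>y\<in>T. if y = y0 then f y else 0)"
    using \<open>finite T\<close> by (simp add: sum.delta' T_def)
  also have "\<dots> = (\<Sum>y\<in>T. f y * (\<Sum>i\<in>I0. a i y0 * a i y))"
    using expansion \<open>T \<subseteq> Lam N\<close> by (intro sum.cong) auto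
  also have "\<dots> = (\<Sum>y\<in>T. \<Sum>i\<in>I0. a i y0 * (f y * a i y))"
    by (simp add: sum_distrib_left mult_ac)
  also have "\<dots> = (\<Sum>i\<in>I0. \<Sum>y\<in>T. a i y0 * (f y * a i y))"
    by (rule sum.swap)
  also have "\<dots> = (\<Sum>i\<in>I0. a i y0 * (\<Sum>y\<in>T. f y * a i y))"
    by (simp add: sum_distrib_left)
  also have "\<dots> = 0"
  proof (intro sum.neutral ballI)
    fix i assume "i \<in> I0"
    have "(\<Sum>y\<in>T. f y * a i y) = (\<Sum>\<^sub>\<infinity>y\<in>Lam N. f y * a i y)"
      by (rule infsum_finite_support(2)[symmetric, OF \<open>finite T\<close> \<open>T \<subseteq> Lam N\<close>])
        (use \<open>i \<in> I0\<close> in \<open>auto simp: T_def\<close>)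
    then show "a i y0 * (\<Sum>y\<in>T. f y * a i y) = 0"
      using f_orth \<open>i \<in> I0\<close> by (simp add: a_def I0_def)
  qed
  finally show ?thesis .
qed

lemma coefficient_family_ONB:
  assumes G_span: "\<And>i. i \<in> I \<Longrightarrow> G i \<in> fin_span \<phi> N"
    and G_orthonormal: "\<And>i j. i \<in> I \<Longrightarrow> j \<in> I \<Longrightarrow> L2ip (G i) (G j) = (if i = j then 1 else 0)"
    and G_complete: "\<And>h. h \<in> fin_span \<phi> N \<Longrightarrow> (\<forall>i\<in>I. L2ip h (G i) = 0) \<Longrightarrow> L2ip h h = 0"
    and G_local: "\<And>y. y \<in> Lam N \<Longrightarrow> finite {i \<in> I. L2ip (scl \<phi> N y) (G i) \<noteq> 0}"
  shows "is_ONB_l2 N I (\<lambda>i y. 2 powr (real N / 2) * L2ip (scl \<phi> N y) (G i))"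
proof -
  define c :: real where "c = 2 powr (real N / 2)"
  have "c > 0" and c_sq: "c * c = 2 ^ N"
    unfolding c_def by (simp_all add: powr_add[symmetric] powr_realpow)
  have ip_eps_coeff: "ip_eps N f (\<lambda>y. c * L2ip (scl \<phi> N y) (G i))
      = c / 2 ^ N * (\<Sum>\<^sub>\<infinity>y\<in>Lam N. f y * L2ip (scl \<phi> N y) (G i))" for f i
    unfolding ip_eps_def by (simp add: infsum_cmult_right' mult_ac)
  show ?thesis
    unfolding is_ONB_l2_def c_def[symmetric]
  proof (intro conjI ballI allI impI)
    fix i assume "i \<in> I"
    then show "in_l2 N (\<lambda>y. c * L2ip (scl \<phi> N y) (G i))"
      unfolding in_l2_def
      by (rule infsum_finite_support(1)[OF finite_L2ip_scl_fin_span[OF G_span]]) auto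
  next
    fix i j assume "i \<in> I" "j \<in> I"
    have "ip_eps N (\<lambda>y. c * L2ip (scl \<phi> N y) (G i)) (\<lambda>y. c * L2ip (scl \<phi> N y) (G j))
        = c / 2 ^ N * (c * (\<Sum>\<^sub>\<infinity>y\<in>Lam N. L2ip (scl \<phi> N y) (G i) * L2ip (scl \<phi> N y) (G j)))"
      by (simp add: ip_eps_coeff mult.assoc infsum_cmult_right')
    also have "\<dots> = L2ip (G i) (G j)"
      using infsum_L2ip_scl[OF G_span continuous_bounded_support_fin_span[OF G_span]]
        \<open>i \<in> I\<close> \<open>j \<in> I\<close> c_sq by (simp add: mult.assoc[symmetric])
    finally show "ip_eps N (\<lambda>y. c * L2ip (scl \<phi> N y) (G i)) (\<lambda>y. c * L2ip (scl \<phi> N y) (G j))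
        = (if i = j then 1 else 0)"
      using G_orthonormal \<open>i \<in> I\<close> \<open>j \<in> I\<close> by simp
  next
    fix f y assume "in_l2 N f \<and> (\<forall>i\<in>I. ip_eps N f (\<lambda>y. c * L2ip (scl \<phi> N y) (G i)) = 0)"
      and "y \<in> Lam N"
    then show "f y = 0"
      by (intro orthogonal_to_coefficients_imp_zero[of I G N, OF G_span G_orthonormal G_complete G_local, of f])
        (use \<open>c > 0\<close> in \<open>auto simp: ip_eps_coeff\<close>)
  qed
qed

end

definition multiscale_index :: "nat \<Rightarrow> nat \<Rightarrow> (real + nat \<times> real) set" where
  "multiscale_index n N = {Inl x | x. x \<in> Lam n} \<union> {Inr (m, x) | m x. n \<le> m \<and> m < N \<and> x \<in> Lam m}"

definition multiscale_fun ::
    "(real \<Rightarrow> real) \<Rightarrow> (real \<Rightarrow> real) \<Rightarrow> nat \<Rightarrow> real + nat \<times> real \<Rightarrow> real \<Rightarrow> real" where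
  "multiscale_fun \<phi> \<psi> n i = (case i of Inl x \<Rightarrow> scl \<phi> n x | Inr (m, x) \<Rightarrow> scl \<psi> m x)"

lemma multiscale_indexE:
  assumes "i \<in> multiscale_index n N"
  obtains x where "i = Inl x" "x \<in> Lam n"
    | m x where "i = Inr (m, x)" "n \<le> m" "m < N" "x \<in> Lam m"
  using assms unfolding multiscale_index_def by blast

locale multiresolution = orthonormal_scaling \<phi> for \<phi> :: "real \<Rightarrow> real" +
  fixes \<psi> :: "real \<Rightarrow> real"
  assumes phi_refinable: "\<And>m x. x \<in> Lam m \<Longrightarrow> scl \<phi> m x \<in> fin_span \<phi> (Suc m)"
    and psi_refinable: "\<And>m x. x \<in> Lam m \<Longrightarrow> scl \<psi> m x \<in> fin_span \<phi> (Suc m)"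
    and psi_supp: "bounded {x. \<psi> x \<noteq> 0}"
    and psi_orthonormal: "\<And>m x x'. x \<in> Lam m \<Longrightarrow> x' \<in> Lam m \<Longrightarrow>
        L2ip (scl \<psi> m x) (scl \<psi> m x') = (if x = x' then 1 else 0)"
    and psi_perp: "\<And>m x f. x \<in> Lam m \<Longrightarrow> f \<in> Vsp \<phi> m \<Longrightarrow> L2ip f (scl \<psi> m x) = 0"
    and psi_complete: "\<And>m f. f \<in> Vsp \<phi> (Suc m) \<Longrightarrow> (\<forall>g\<in>Vsp \<phi> m. L2ip f g = 0) \<Longrightarrow>
        (\<forall>x\<in>Lam m. L2ip f (scl \<psi> m x) = 0) \<Longrightarrow> L2ip f f = 0"
begin

lemma fin_span_phi_mono: "m \<le> m' \<Longrightarrow> fin_span \<phi> m \<subseteq> fin_span \<phi> m'"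
  using fin_span_mono[OF phi_refinable] by blast

lemma scl_phi_fin_span: "x \<in> Lam m \<Longrightarrow> m \<le> m' \<Longrightarrow> scl \<phi> m x \<in> fin_span \<phi> m'"
  using fin_span_phi_mono fin_span_scl by blast

lemma scl_psi_fin_span: "x \<in> Lam m \<Longrightarrow> m < m' \<Longrightarrow> scl \<psi> m x \<in> fin_span \<phi> m'"
  using fin_span_phi_mono[of "Suc m" m'] psi_refinable by auto

lemma continuous_bounded_support_scl_psi:
  "x \<in> Lam m \<Longrightarrow> continuous_bounded_support (scl \<psi> m x)"
  using continuous_bounded_support_fin_span psi_refinable by blast

lemma L2ip_fin_span_scl_psi:
  "h \<in> fin_span \<phi> m \<Longrightarrow> x \<in> Lam m \<Longrightarrow> L2ip h (scl \<psi> m x) = 0"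
  using psi_perp fin_span_subset_Vsp[OF continuous_bounded_support_phi] by blast

lemma fin_span_Suc_null_if_orthogonal:
  assumes "q \<in> fin_span \<phi> (Suc k)"
    and "\<And>x. x \<in> Lam k \<Longrightarrow> L2ip q (scl \<phi> k x) = 0"
    and "\<And>x. x \<in> Lam k \<Longrightarrow> L2ip q (scl \<psi> k x) = 0"
  shows "L2ip q q = 0"
proof (rule psi_complete)
  have "continuous_bounded_support q"
    using assms(1) by (rule continuous_bounded_support_fin_span)
  then show "\<forall>g\<in>Vsp \<phi> k. L2ip q g = 0"
    using L2ip_orthogonal_Vsp assms(2) by blast
  show "q \<in> Vsp \<phi> (Suc k)"
    by (rule fin_span_subset_Vsp[OF continuous_bounded_support_phi assms(1)])
  show "\<forall>x\<in>Lam k. L2ip q (scl \<psi> k x) = 0"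
    using assms(3) by blast
qed

lemma fin_span_null_if_orthogonal_to_wavelets:
  assumes "h \<in> fin_span \<phi> N" "n \<le> N"
    and "\<And>x. x \<in> Lam n \<Longrightarrow> L2ip h (scl \<phi> n x) = 0"
    and "\<And>m x. n \<le> m \<Longrightarrow> m < N \<Longrightarrow> x \<in> Lam m \<Longrightarrow> L2ip h (scl \<psi> m x) = 0"
  shows "L2ip h h = 0"
  using assms(2,1,3,4)
proof (induction N arbitrary: h rule: dec_induct)
  case base
  have "continuous_bounded_support h"
    using base.prems(1) by (rule continuous_bounded_support_fin_span)
  from L2ip_orthogonal_fin_span[OF this base.prems(2) base.prems(1)] show ?case .
next
  case (step k)
  have h: "continuous_bounded_support h"
    using step.prems(1) by (rule continuous_bounded_support_fin_span)
  obtain p where p: "p \<in> fin_span \<phi> k"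
    and residual_perp: "\<And>x. x \<in> Lam k \<Longrightarrow> L2ip (\<lambda>t. h t - p t) (scl \<phi> k x) = 0"
    using fin_span_projection[OF h] by blast
  define q where "q t = h t - p t" for t
  have q_span: "q \<in> fin_span \<phi> (Suc k)"
    unfolding q_def[abs_def] using step.prems(1) fin_span_phi_mono[of k "Suc k"] p
    by (intro fin_span_diff) auto
  have p_cbs: "continuous_bounded_support p" and q_cbs: "continuous_bounded_support q"
    using p q_span by (simp_all add: continuous_bounded_support_fin_span)
  have q_perp: "L2ip q (scl \<phi> k x) = 0" if "x \<in> Lam k" for x
    unfolding q_def[abs_def] using that by (rule residual_perp)
  have q_perp_span: "L2ip q u = 0" if "u \<in> fin_span \<phi> k" for u
    using L2ip_orthogonal_fin_span[OF q_cbs q_perp that] .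
  have L2ip_p: "L2ip p g = L2ip h g" if "g \<in> fin_span \<phi> k" for g
    using L2ip_diff_left[OF h p_cbs continuous_bounded_support_fin_span[OF that]] q_perp_span[OF that]
    by (simp add: q_def[abs_def])
  have "L2ip p p = 0"
  proof (rule step.IH[OF p])
    show "L2ip p (scl \<phi> n x) = 0" if "x \<in> Lam n" for x
      using L2ip_p[OF scl_phi_fin_span[OF that step.hyps(1)]] step.prems(2)[OF that] by simp
    show "L2ip p (scl \<psi> m x) = 0" if "n \<le> m" "m < k" "x \<in> Lam m" for m x
      using L2ip_p[OF scl_psi_fin_span[OF that(3,2)]] step.prems(3) that by simp
  qed
  moreover have "L2ip q q = 0"
  proof (rule fin_span_Suc_null_if_orthogonal[OF q_span q_perp])
    fix x assume x: "x \<in> Lam k"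
    have "L2ip q (scl \<psi> k x) = L2ip h (scl \<psi> k x) - L2ip p (scl \<psi> k x)"
      unfolding q_def[abs_def]
      by (rule L2ip_diff_left[OF h p_cbs continuous_bounded_support_scl_psi[OF x]])
    then show "L2ip q (scl \<psi> k x) = 0"
      using step.prems(3)[OF step.hyps(1) _ x] L2ip_fin_span_scl_psi[OF p x] by simp
  qed
  moreover have "h = (\<lambda>t. p t + q t)" by (simp add: q_def)
  ultimately show ?case
    using L2ip_add_self_orthogonal[OF p_cbs q_cbs q_perp_span[OF p]] by simp
qed

lemma multiscale_fun_fin_span:
  "n \<le> N \<Longrightarrow> i \<in> multiscale_index n N \<Longrightarrow> multiscale_fun \<phi> \<psi> n i \<in> fin_span \<phi> N"
  by (elim multiscale_indexE) (auto simp: multiscale_fun_def intro: scl_phi_fin_span scl_psi_fin_span)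

lemma multiscale_fun_orthonormal:
  assumes "i \<in> multiscale_index n N" "j \<in> multiscale_index n N"
  shows "L2ip (multiscale_fun \<phi> \<psi> n i) (multiscale_fun \<phi> \<psi> n j) = (if i = j then 1 else 0)"
proof -
  have phi_psi: "L2ip (scl \<phi> n x) (scl \<psi> m x') = 0" "L2ip (scl \<psi> m x') (scl \<phi> n x) = 0"
    if "n \<le> m" "x \<in> Lam n" "x' \<in> Lam m" for x m x'
    using L2ip_fin_span_scl_psi[OF scl_phi_fin_span that(3)] that by (simp_all add: L2ip_commute)
  have psi_psi: "L2ip (scl \<psi> m x) (scl \<psi> m' x') = (if (m, x) = (m', x') then 1 else 0)"
    if "x \<in> Lam m" "x' \<in> Lam m'" for m x m' x'
  proof (cases m m' rule: linorder_cases)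
    case less
    then show ?thesis using L2ip_fin_span_scl_psi[OF scl_psi_fin_span] that by auto
  next
    case equal
    then show ?thesis using psi_orthonormal that by auto
  next
    case greater
    then show ?thesis
      using L2ip_fin_span_scl_psi[OF scl_psi_fin_span[OF that(2)] that(1)]
      by (auto simp: L2ip_commute)
  qed
  from assms show ?thesis
    by (elim multiscale_indexE) (auto simp: multiscale_fun_def scl_orthonormal phi_psi psi_psi)
qed

lemma Inl_in_multiscale_index: "x \<in> Lam n \<Longrightarrow> Inl x \<in> multiscale_index n N"
  unfolding multiscale_index_def by blast

lemma Inr_in_multiscale_index:
  "n \<le> m \<Longrightarrow> m < N \<Longrightarrow> x \<in> Lam m \<Longrightarrow> Inr (m, x) \<in> multiscale_index n N"
  unfolding multiscale_index_def by blast

lemma multiscale_fun_complete: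
  assumes "n \<le> N" "h \<in> fin_span \<phi> N"
    and "\<forall>i\<in>multiscale_index n N. L2ip h (multiscale_fun \<phi> \<psi> n i) = 0"
  shows "L2ip h h = 0"
proof (rule fin_span_null_if_orthogonal_to_wavelets[OF assms(2,1)])
  show "L2ip h (scl \<phi> n x) = 0" if "x \<in> Lam n" for x
    using assms(3) Inl_in_multiscale_index[OF that] by (force simp: multiscale_fun_def)
  show "L2ip h (scl \<psi> m x) = 0" if "n \<le> m" "m < N" "x \<in> Lam m" for m x
    using assms(3) Inr_in_multiscale_index[OF that] by (force simp: multiscale_fun_def)
qed

lemma multiscale_fun_local:
  "finite {i \<in> multiscale_index n N. L2ip (scl \<phi> N y) (multiscale_fun \<phi> \<psi> n i) \<noteq> 0}"
proof -
  let ?B = "Inl ` {x \<in> Lam n. L2ip (scl \<phi> N y) (scl \<phi> n x) \<noteq> 0} \<union>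
      (\<Union>m\<in>{n..<N}. (\<lambda>x. Inr (m, x)) ` {x \<in> Lam m. L2ip (scl \<phi> N y) (scl \<psi> m x) \<noteq> 0})"
  have "{i \<in> multiscale_index n N. L2ip (scl \<phi> N y) (multiscale_fun \<phi> \<psi> n i) \<noteq> 0} \<subseteq> ?B"
  proof
    fix i assume "i \<in> {i \<in> multiscale_index n N. L2ip (scl \<phi> N y) (multiscale_fun \<phi> \<psi> n i) \<noteq> 0}"
    then have "i \<in> multiscale_index n N" "L2ip (scl \<phi> N y) (multiscale_fun \<phi> \<psi> n i) \<noteq> 0"
      by simp_all
    then show "i \<in> ?B" by (elim multiscale_indexE) (auto simp: multiscale_fun_def)
  qed
  moreover have "bounded {x. \<phi> x \<noteq> 0}"
    using continuous_bounded_support_phi unfolding continuous_bounded_support_def by blast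
  then have "finite ?B"
    using finite_L2ip_scl_nonzero[OF _ continuous_bounded_support_scl_phi]
      finite_L2ip_scl_nonzero[OF psi_supp continuous_bounded_support_scl_phi] by auto
  ultimately show ?thesis by (rule finite_subset)
qed

lemma multiscale_coefficients_ONB:
  assumes "n \<le> N"
  shows "is_ONB_l2 N (multiscale_index n N)
           (\<lambda>i y. 2 powr (real N / 2) * L2ip (scl \<phi> N y) (multiscale_fun \<phi> \<psi> n i))"
  by (rule coefficient_family_ONB[of "multiscale_index n N" "multiscale_fun \<phi> \<psi> n",
        OF multiscale_fun_fin_span[OF assms] multiscale_fun_orthonormal
        multiscale_fun_complete[OF assms] multiscale_fun_local])

end

theorem proposition4p9:
  fixes \<phi> \<psi> :: "real \<Rightarrow> real" and r :: real and K :: "real set"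
    and a b :: "real \<Rightarrow> real" and N n :: nat
  assumes r_pos: "r > 0"
    and phi_Cr: "Cr r \<phi>" and phi_supp: "bounded {x. \<phi> x \<noteq> 0}"
    and phi_int: "(\<integral>x. \<phi> x \<partial>lborel) = 1"
    and phi_orth: "\<And>k::int. (\<integral>x. \<phi> x * \<phi> (x + of_int k) \<partial>lborel) = (if k = 0 then 1 else 0)"
    and K_fin: "finite K" and K_sub: "K \<subseteq> Lam 1"
    and refine: "\<And>m x. x \<in> Lam m \<Longrightarrow>
        scl \<phi> m x = (\<lambda>y. \<Sum>k\<in>K. a k * scl \<phi> (Suc m) (x + k / 2 ^ m) y)"
    and psi_Cr: "Cr r \<psi>" and psi_supp: "bounded {x. \<psi> x \<noteq> 0}"
    and psi_refine: "\<And>m x. x \<in> Lam m \<Longrightarrow>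
        scl \<psi> m x = (\<lambda>y. \<Sum>k\<in>K. b k * scl \<phi> (Suc m) (x + k / 2 ^ m) y)"
    and psi_orthonormal: "\<And>m x x'. x \<in> Lam m \<Longrightarrow> x' \<in> Lam m \<Longrightarrow>
        L2ip (scl \<psi> m x) (scl \<psi> m x') = (if x = x' then 1 else 0)"
    and psi_perp: "\<And>m x f. x \<in> Lam m \<Longrightarrow> f \<in> Vsp \<phi> m \<Longrightarrow> L2ip f (scl \<psi> m x) = 0"
    and psi_complete: "\<And>m f. f \<in> Vsp \<phi> (Suc m) \<Longrightarrow> (\<forall>g\<in>Vsp \<phi> m. L2ip f g = 0) \<Longrightarrow>
        (\<forall>x\<in>Lam m. L2ip f (scl \<psi> m x) = 0) \<Longrightarrow> L2ip f f = 0"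
    and n_lt: "n < N"
  shows "is_ONB_l2 N
           ({Inl x | x. x \<in> Lam n} \<union> {Inr (m, x) | m x. n \<le> m \<and> m < N \<and> x \<in> Lam m})
           (\<lambda>i. case i of Inl x \<Rightarrow> coarse \<phi> \<phi> N n x
                         | Inr (m, x) \<Rightarrow> coarse \<phi> \<psi> N m x)"
proof -
  interpret multiresolution \<phi> \<psi>
  proof unfold_locales
    show "continuous_bounded_support \<phi>"
      unfolding continuous_bounded_support_def using Cr_continuous[OF r_pos phi_Cr] phi_supp by blast
    show "L2ip (scl \<phi> m x) (scl \<phi> m x') = (if x = x' then 1 else 0)"
      if "x \<in> Lam m" "x' \<in> Lam m" for m x x'
      using orthonormal_shifts_imp_scl_orthonormal[OF phi_orth that] .
    show "scl \<phi> m x \<in> fin_span \<phi> (Suc m)" "scl \<psi> m x \<in> fin_span \<phi> (Suc m)"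
      if "x \<in> Lam m" for m x
      using refinement_in_fin_span[OF K_fin K_sub that] refine[OF that] psi_refine[OF that] by simp_all
  qed (fact psi_supp psi_orthonormal psi_perp psi_complete)+
  have "(\<lambda>i. case i of Inl x \<Rightarrow> coarse \<phi> \<phi> N n x | Inr (m, x) \<Rightarrow> coarse \<phi> \<psi> N m x)
      = (\<lambda>i y. 2 powr (real N / 2) * L2ip (scl \<phi> N y) (multiscale_fun \<phi> \<psi> n i))"
    by (auto simp: fun_eq_iff coarse_def multiscale_fun_def split: sum.split)
  then show ?thesis
    using multiscale_coefficients_ONB[of n N] n_lt unfolding multiscale_index_def by simp
qed

end
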